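(* Consider the closed-loop scalar system $\dot X(t)=aX(t)+bU(t)$ with $a>0$, $b\neq0$, and the corresponding open-loop system $\dot X(t)=aX(t)$ (i.e. $b=0$), both with random initial state $X(0)$ satisfying $h(X(0))<\infty$ and $|X(0)|<L$ ($L$ known to sensor and controller), with the sensor communicating to the controller/estimator over the timing channel described in the context. If there exists a controller such that in closed loop $|X(t)|\to0$ in probability as $t\to\infty$, then there exists an estimator such that in open loop $|X(t)-\hat X(t)|\to0$ in probability as $t\to\infty$.
   Context: Timing channel: symbols from a one-element alphabet; the channel is initialized with a symbol received at time $0$; after the acknowledgment of the $i$-th reception, the sender waits $W_{i+1}\ge0$ and transmits the next symbol, received after an i.i.d. random delay $S_{i+1}\ge0$; $D_i=W_i+S_i$, $\mathcal{T}_n=\sum_{i\le n}D_i$. The sensor knows $X(0)$, $L$ and the dynamics and encodes into the waiting times (random i.i.d. codebook independent of the delays; acknowledgments used only to avoid queuing). The controller (resp. estimator), at any time $t$, computes $U(t)$ (resp. $\hat X(t)$) from the inter-reception times of all symbols received up to time $t$, together with $L$ and the dynamics. *)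

theory Defs
  imports "HOL-Probability.Probability"
begin

text \<open>Indexing convention: symbol number n+1 of the paper is index n here.
  W n = waiting time W_{n+1}, S n = channel delay S_{n+1}.\<close>

definition inter_time :: "(nat \<Rightarrow> 'w \<Rightarrow> real) \<Rightarrow> (nat \<Rightarrow> 'w \<Rightarrow> real) \<Rightarrow> nat \<Rightarrow> 'w \<Rightarrow> real" where
  "inter_time W S i \<omega> = W i \<omega> + S i \<omega>"

definition recv_time :: "(nat \<Rightarrow> 'w \<Rightarrow> real) \<Rightarrow> (nat \<Rightarrow> 'w \<Rightarrow> real) \<Rightarrow> nat \<Rightarrow> 'w \<Rightarrow> real" where
  "recv_time W S n \<omega> = (\<Sum>i\<le>n. inter_time W S i \<omega>)"

text \<open>What the receiver knows at time t: the inter-reception times of all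
  symbols received up to time t (None for symbols not yet received).\<close>
definition observed :: "(nat \<Rightarrow> 'w \<Rightarrow> real) \<Rightarrow> (nat \<Rightarrow> 'w \<Rightarrow> real) \<Rightarrow> real \<Rightarrow> 'w \<Rightarrow> (nat \<Rightarrow> real option)" where
  "observed W S t \<omega> = (\<lambda>i. if recv_time W S i \<omega> \<le> t then Some (inter_time W S i \<omega>) else None)"

text \<open>Finite differential entropy h(X) (literal unfolding of Information.finite_entropy, base 2).\<close>
definition finite_diff_entropy :: "'w measure \<Rightarrow> ('w \<Rightarrow> real) \<Rightarrow> bool" where
  "finite_diff_entropy M X \<longleftrightarrow> (\<exists>f. distributed M lborel X (\<lambda>x. ennreal (f x)) \<and>
      integrable lborel (\<lambda>x. f x * log 2 (f x)) \<and> (\<forall>x. 0 \<le> f x))"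

definition indep_rv :: "'w measure \<Rightarrow> 'a measure \<Rightarrow> ('w \<Rightarrow> 'a) \<Rightarrow> 'b measure \<Rightarrow> ('w \<Rightarrow> 'b) \<Rightarrow> bool" where
  "indep_rv M Ma A Mb B \<longleftrightarrow> A \<in> measurable M Ma \<and> B \<in> measurable M Mb \<and>
     distr M (Ma \<Otimes>\<^sub>M Mb) (\<lambda>\<omega>. (A \<omega>, B \<omega>)) = distr M Ma A \<Otimes>\<^sub>M distr M Mb B"

definition iid_delays :: "'w measure \<Rightarrow> ('w \<Rightarrow> real) \<Rightarrow> (nat \<Rightarrow> 'w \<Rightarrow> real) \<Rightarrow> bool" where
  "iid_delays M X0 S \<longleftrightarrow>
     (\<forall>i. S i \<in> borel_measurable M) \<and> (\<forall>i. \<forall>\<omega>\<in>space M. 0 \<le> S i \<omega>) \<and>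
     prob_space.indep_vars M (\<lambda>_. borel) S UNIV \<and>
     (\<forall>i. distr M borel (S i) = distr M borel (S 0)) \<and>
     indep_rv M borel X0 (PiM UNIV (\<lambda>_. borel)) (\<lambda>\<omega> i. S i \<omega>)"

definition valid_codebook :: "'w measure \<Rightarrow> ('w \<Rightarrow> real) \<Rightarrow> (nat \<Rightarrow> 'w \<Rightarrow> real) \<Rightarrow> ('w \<Rightarrow> nat \<Rightarrow> real) \<Rightarrow> bool" where
  "valid_codebook M X0 S \<Theta> \<longleftrightarrow>
     (\<forall>i. (\<lambda>\<omega>. \<Theta> \<omega> i) \<in> borel_measurable M) \<and>
     prob_space.indep_vars M (\<lambda>_. borel) (\<lambda>i \<omega>. \<Theta> \<omega> i) UNIV \<and>
     (\<forall>i. distr M borel (\<lambda>\<omega>. \<Theta> \<omega> i) = distr M borel (\<lambda>\<omega>. \<Theta> \<omega> 0)) \<and>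
     indep_rv M borel X0 (PiM UNIV (\<lambda>_. borel)) \<Theta> \<and>
     indep_rv M (borel \<Otimes>\<^sub>M PiM UNIV (\<lambda>_. borel)) (\<lambda>\<omega>. (X0 \<omega>, \<Theta> \<omega>))
        (PiM UNIV (\<lambda>_. borel)) (\<lambda>\<omega> i. S i \<omega>)"

text \<open>Waiting times produced by the sensor's encoder from X(0) and the codebook
  (acknowledgments used only to avoid queuing).\<close>
definition waits :: "(nat \<Rightarrow> real \<Rightarrow> (nat \<Rightarrow> real) \<Rightarrow> real) \<Rightarrow> ('w \<Rightarrow> real) \<Rightarrow> ('w \<Rightarrow> nat \<Rightarrow> real) \<Rightarrow> nat \<Rightarrow> 'w \<Rightarrow> real" where
  "waits enc X0 \<Theta> i \<omega> = enc i (X0 \<omega>) (\<Theta> \<omega>)"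

definition valid_encoder :: "'w measure \<Rightarrow> ('w \<Rightarrow> real) \<Rightarrow> ('w \<Rightarrow> nat \<Rightarrow> real) \<Rightarrow> (nat \<Rightarrow> real \<Rightarrow> (nat \<Rightarrow> real) \<Rightarrow> real) \<Rightarrow> bool" where
  "valid_encoder M X0 \<Theta> enc \<longleftrightarrow>
     (\<forall>i x c. 0 \<le> enc i x c) \<and> (\<forall>i. waits enc X0 \<Theta> i \<in> borel_measurable M)"

text \<open>Closed-loop state of dX = aX + bU with X(0) = X0 (variation of constants).\<close>
definition closed_loop_state :: "real \<Rightarrow> real \<Rightarrow> ('w \<Rightarrow> real) \<Rightarrow> (real \<Rightarrow> 'w \<Rightarrow> real) \<Rightarrow> real \<Rightarrow> 'w \<Rightarrow> real" where
  "closed_loop_state a b X0 U t \<omega> =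
     exp (a * t) * X0 \<omega> + integral {0..t} (\<lambda>s. exp (a * (t - s)) * b * U s \<omega>)"

definition open_loop_state :: "real \<Rightarrow> ('w \<Rightarrow> real) \<Rightarrow> real \<Rightarrow> 'w \<Rightarrow> real" where
  "open_loop_state a X0 t \<omega> = exp (a * t) * X0 \<omega>"

definition tendsto_zero_in_prob :: "'w measure \<Rightarrow> (real \<Rightarrow> 'w \<Rightarrow> real) \<Rightarrow> bool" where
  "tendsto_zero_in_prob M Y \<longleftrightarrow>
     (\<forall>t\<ge>0. Y t \<in> borel_measurable M) \<and>
     (\<forall>\<epsilon>>0. ((\<lambda>t. measure M {\<omega>\<in>space M. \<bar>Y t \<omega>\<bar> > \<epsilon>}) \<longlongrightarrow> 0) at_top)"

end

theory Submission
  imports Defs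
begin

text \<open>Because reception times are nondecreasing, the information available at time t
  contains the information available at every earlier time s. An estimator can
  therefore run the closed-loop controller in simulation: it computes the control
  U(s) for all s \<le> t and outputs the state that U would cancel,
  - integral_0^t exp(a (t - s)) b U(s) ds.
  The open-loop estimation error then equals the closed-loop state pathwise, so it
  tends to 0 in probability whenever the closed-loop state does.\<close>

definition truncate_observation :: "(nat \<Rightarrow> real option) \<Rightarrow> real \<Rightarrow> nat \<Rightarrow> real option" where
  "truncate_observation ob s i =
     (if (\<forall>j\<le>i. ob j \<noteq> None) \<and> (\<Sum>j\<le>i. the (ob j)) \<le> s then ob i else None)"

lemma recv_time_mono:
  assumes "\<And>i. 0 \<le> inter_time W S i \<omega>" and "j \<le> i"
  shows "recv_time W S j \<omega> \<le> recv_time W S i \<omega>"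
  unfolding recv_time_def using assms by (intro sum_mono2) auto

lemma sum_the_observed:
  assumes "\<forall>j\<le>i. observed W S t \<omega> j \<noteq> None"
  shows "(\<Sum>j\<le>i. the (observed W S t \<omega> j)) = recv_time W S i \<omega>"
  unfolding recv_time_def using assms
  by (intro sum.cong) (auto simp: observed_def split: if_splits)

lemma truncate_observed:
  assumes nonneg: "\<And>i. 0 \<le> inter_time W S i \<omega>" and "s \<le> t"
  shows "truncate_observation (observed W S t \<omega>) s = observed W S s \<omega>"
proof
  fix i
  let ?ob = "observed W S t \<omega>"
  show "truncate_observation ?ob s i = observed W S s \<omega> i"
  proof (cases "recv_time W S i \<omega> \<le> s")
    case True
    have "recv_time W S j \<omega> \<le> t" if "j \<le> i" for j
      using recv_time_mono[OF nonneg that] True \<open>s \<le> t\<close> by linarith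
    then have "\<forall>j\<le>i. ?ob j \<noteq> None"
      by (simp add: observed_def)
    with True \<open>s \<le> t\<close> show ?thesis
      using sum_the_observed[of i W S t \<omega>]
      by (simp add: truncate_observation_def observed_def)
  next
    case False
    then have "\<not> ((\<forall>j\<le>i. ?ob j \<noteq> None) \<and> (\<Sum>j\<le>i. the (?ob j)) \<le> s)"
      using sum_the_observed[of i W S t \<omega>] by auto
    with False show ?thesis
      by (simp add: truncate_observation_def observed_def)
  qed
qed

lemma tendsto_zero_in_prob_cong:
  assumes "\<And>t \<omega>. \<omega> \<in> space M \<Longrightarrow> Y t \<omega> = Z t \<omega>"
  shows "tendsto_zero_in_prob M Y \<longleftrightarrow> tendsto_zero_in_prob M Z"
proof -
  have "Y t \<in> borel_measurable M \<longleftrightarrow> Z t \<in> borel_measurable M" for t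
    using assms by (intro measurable_cong) auto
  moreover have "{\<omega>\<in>space M. \<bar>Y t \<omega>\<bar> > e} = {\<omega>\<in>space M. \<bar>Z t \<omega>\<bar> > e}" for t e
    using assms by auto
  ultimately show ?thesis
    unfolding tendsto_zero_in_prob_def by simp
qed

definition replay_estimator ::
    "real \<Rightarrow> real \<Rightarrow> (real \<Rightarrow> (nat \<Rightarrow> real option) \<Rightarrow> real) \<Rightarrow> real \<Rightarrow> (nat \<Rightarrow> real option) \<Rightarrow> real" where
  "replay_estimator a b ctrl t ob =
     - integral {0..t} (\<lambda>s. exp (a * (t - s)) * b * ctrl s (truncate_observation ob s))"

lemma open_loop_error_replay_estimator:
  assumes "\<And>i. 0 \<le> inter_time W S i \<omega>"
  shows "open_loop_state a X0 t \<omega> - replay_estimator a b ctrl t (observed W S t \<omega>)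
       = closed_loop_state a b X0 (\<lambda>s \<omega>. ctrl s (observed W S s \<omega>)) t \<omega>"
proof -
  have "integral {0..t} (\<lambda>s. exp (a * (t - s)) * b * ctrl s (truncate_observation (observed W S t \<omega>) s))
      = integral {0..t} (\<lambda>s. exp (a * (t - s)) * b * ctrl s (observed W S s \<omega>))"
    by (intro integral_cong) (simp add: truncate_observed[OF assms])
  then show ?thesis
    by (simp add: replay_estimator_def closed_loop_state_def open_loop_state_def)
qed

theorem lemma1:
  fixes M :: "'w measure" and X0 :: "'w \<Rightarrow> real" and S :: "nat \<Rightarrow> 'w \<Rightarrow> real"
    and a b L :: real
  assumes "prob_space M"
    and "a > 0" and "b \<noteq> 0"
    and "X0 \<in> borel_measurable M" and "finite_diff_entropy M X0"
    and "\<forall>\<omega>\<in>space M. \<bar>X0 \<omega>\<bar> < L"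
    and "iid_delays M X0 S"
    and "\<exists>\<Theta> enc ctrl. valid_codebook M X0 S \<Theta> \<and> valid_encoder M X0 \<Theta> enc \<and>
           (\<forall>\<omega>\<in>space M. \<forall>t\<ge>0. (\<lambda>s. ctrl s (observed (waits enc X0 \<Theta>) S s \<omega>)) integrable_on {0..t}) \<and>
           tendsto_zero_in_prob M
             (closed_loop_state a b X0 (\<lambda>s \<omega>. ctrl s (observed (waits enc X0 \<Theta>) S s \<omega>)))"
  shows "\<exists>\<Theta> enc est. valid_codebook M X0 S \<Theta> \<and> valid_encoder M X0 \<Theta> enc \<and>
           tendsto_zero_in_prob M
             (\<lambda>t \<omega>. open_loop_state a X0 t \<omega> - est t (observed (waits enc X0 \<Theta>) S t \<omega>))"
proof -
  obtain \<Theta> enc ctrl where codebook: "valid_codebook M X0 S \<Theta>"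
    and encoder: "valid_encoder M X0 \<Theta> enc"
    and stabilized: "tendsto_zero_in_prob M
          (closed_loop_state a b X0 (\<lambda>s \<omega>. ctrl s (observed (waits enc X0 \<Theta>) S s \<omega>)))"
    using assms(8) by blast
  have "0 \<le> inter_time (waits enc X0 \<Theta>) S i \<omega>" if "\<omega> \<in> space M" for i \<omega>
    using encoder assms(7) that
    by (simp add: valid_encoder_def iid_delays_def inter_time_def waits_def)
  then have "tendsto_zero_in_prob M (\<lambda>t \<omega>. open_loop_state a X0 t \<omega>
               - replay_estimator a b ctrl t (observed (waits enc X0 \<Theta>) S t \<omega>))"
    using stabilized
    by (subst tendsto_zero_in_prob_cong) (auto simp: open_loop_error_replay_estimator)
  with codebook encoder show ?thesis
    by blast
qed

end
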